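(* Suppose $n\ge 3k$ and let $U_1,\dots,U_{\binom nk},V_1,\dots,V_n\in\mathbb{R}^d$ be a margin-$m$, relative-bias-$0$ embedding of $S_{n,k}$ in dimension $d$. Let $V\in\mathbb{R}^{d\times n}$ be the matrix with columns $V_1,\dots,V_n$. Then every $x\in\mathbb{R}^n$ with at most $k$ nonzero coordinates satisfies $\|Vx\|_2\ge m\|x\|_1$.
   Context: $S_{n,k}\in\{0,1\}^{\binom{n}{k}\times n}$ is the matrix whose rows are all the distinct vectors in $\{0,1\}^n$ with exactly $k$ ones, each appearing exactly once. For $A\in\{0,1\}^{N\times n}$ and $m\ge0$, unit vectors $U_1,\dots,U_N,V_1,\dots,V_n\in\mathbb{R}^d$ form a margin-$m$, relative-bias-$0$ embedding of $A$ if $\langle U_j,V_i\rangle\ge m$ whenever $A_{ji}=1$ and $\langle U_j,V_i\rangle\le -m$ whenever $A_{ji}=0$. *)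

theory Defs
  imports "HOL-Analysis.Analysis"
begin

text \<open>Rows of S_{n,k}: all 0/1 vectors of length n with exactly k ones, each exactly once.
  We index the rows by the support sets themselves (k-subsets of {0..<n});
  entry (S,i) of S_{n,k} is 1 iff i is in S.\<close>

definition Snk_rows :: "nat \<Rightarrow> nat \<Rightarrow> nat set set" where
  "Snk_rows n k = {S. S \<subseteq> {0..<n} \<and> card S = k}"

definition Snk :: "nat set \<Rightarrow> nat \<Rightarrow> bool" where
  "Snk S i \<longleftrightarrow> i \<in> S"

definition margin_embedding ::
  "('j \<Rightarrow> nat \<Rightarrow> bool) \<Rightarrow> 'j set \<Rightarrow> nat \<Rightarrow> real \<Rightarrow> ('j \<Rightarrow> 'a::real_inner) \<Rightarrow> (nat \<Rightarrow> 'a) \<Rightarrow> bool" where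
  "margin_embedding A J n m U V \<longleftrightarrow>
     m \<ge> 0 \<and>
     (\<forall>j\<in>J. norm (U j) = 1) \<and> (\<forall>i<n. norm (V i) = 1) \<and>
     (\<forall>j\<in>J. \<forall>i<n. (A j i \<longrightarrow> inner (U j) (V i) \<ge> m) \<and> (\<not> A j i \<longrightarrow> inner (U j) (V i) \<le> - m))"

end

theory Submission
  imports Defs
begin

text \<open>Pick a row S of S_{n,k} that contains every positive coordinate of x and no negative one;
  it exists because x has at most k nonzero coordinates and n \<ge> 2k (the hypothesis n \<ge> 3k
  is stronger than needed). Then each term x_i \<langle>U_S, V_i\<rangle> is at least m |x_i|, so
  m \<parallel>x\<parallel>_1 \<le> \<langle>U_S, Vx\<rangle> \<le> \<parallel>Vx\<parallel> by Cauchy-Schwarz, U_S being a unit vector.\<close>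

lemma margin_embedding_sign_compatible_norm_ge:
  fixes x :: "nat \<Rightarrow> real"
  assumes emb: "margin_embedding A J n m U V" and j: "j \<in> J"
    and pos: "\<And>i. i < n \<Longrightarrow> A j i \<Longrightarrow> x i \<ge> 0"
    and neg: "\<And>i. i < n \<Longrightarrow> \<not> A j i \<Longrightarrow> x i \<le> 0"
  shows "m * (\<Sum>i<n. \<bar>x i\<bar>) \<le> norm (\<Sum>i<n. x i *\<^sub>R V i)"
proof -
  have unit: "norm (U j) = 1"
    and margin: "\<And>i. i < n \<Longrightarrow> (A j i \<longrightarrow> m \<le> inner (U j) (V i)) \<and> (\<not> A j i \<longrightarrow> inner (U j) (V i) \<le> - m)"
    using emb j unfolding margin_embedding_def by auto
  have term_ge: "m * \<bar>x i\<bar> \<le> x i * inner (U j) (V i)" if "i < n" for i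
  proof (cases "A j i")
    case True
    then have "m \<le> inner (U j) (V i)" "x i \<ge> 0" using margin pos that by auto
    then show ?thesis using mult_right_mono[of m "inner (U j) (V i)" "x i"] by (simp add: mult.commute)
  next
    case False
    then have "inner (U j) (V i) \<le> - m" "x i \<le> 0" using margin neg that by auto
    then show ?thesis using mult_right_mono_neg[of "inner (U j) (V i)" "- m" "x i"] by (simp add: mult.commute)
  qed
  have "m * (\<Sum>i<n. \<bar>x i\<bar>) = (\<Sum>i<n. m * \<bar>x i\<bar>)" by (simp add: sum_distrib_left)
  also have "\<dots> \<le> (\<Sum>i<n. x i * inner (U j) (V i))" by (rule sum_mono) (simp add: term_ge)
  also have "\<dots> = inner (U j) (\<Sum>i<n. x i *\<^sub>R V i)" by (simp add: inner_sum_right)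
  also have "\<dots> \<le> norm (U j) * norm (\<Sum>i<n. x i *\<^sub>R V i)" by (rule norm_cauchy_schwarz)
  finally show ?thesis using unit by simp
qed

lemma Snk_row_sign_compatible:
  fixes x :: "nat \<Rightarrow> real"
  assumes "2 * k \<le> n" and sparse: "card {i. i < n \<and> x i \<noteq> 0} \<le> k"
  obtains S where "S \<in> Snk_rows n k" "\<And>i. i \<in> S \<Longrightarrow> x i \<ge> 0"
    "\<And>i. i < n \<Longrightarrow> i \<notin> S \<Longrightarrow> x i \<le> 0"
proof -
  define supp where "supp = {i. i < n \<and> x i \<noteq> 0}"
  define positive where "positive = {i. i < n \<and> x i > 0}"
  define nonneg where "nonneg = {i. i < n \<and> x i \<ge> 0}"
  have "card positive \<le> card supp"
    by (rule card_mono) (auto simp: positive_def supp_def)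
  then have "card positive \<le> k" using sparse supp_def by simp
  have "n - card supp = card ({0..<n} - supp)"
    by (simp add: card_Diff_subset supp_def subset_iff)
  also have "\<dots> \<le> card nonneg"
    by (rule card_mono) (auto simp: nonneg_def supp_def)
  finally have "k \<le> card nonneg" using assms supp_def by simp
  moreover have "positive \<subseteq> nonneg" "finite nonneg" by (auto simp: positive_def nonneg_def)
  ultimately obtain S where S: "positive \<subseteq> S" "S \<subseteq> nonneg" "card S = k"
    using \<open>card positive \<le> k\<close> exists_subset_between by meson
  show thesis
  proof
    show "S \<in> Snk_rows n k" using S by (auto simp: Snk_rows_def nonneg_def)
  qed (use S in \<open>auto simp: positive_def nonneg_def\<close>)
qed

theorem lemma3p2:
  fixes n k :: nat and m :: real
    and U :: "nat set \<Rightarrow> real ^ 'd" and V :: "nat \<Rightarrow> real ^ 'd"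
    and x :: "nat \<Rightarrow> real"
  assumes "n \<ge> 3 * k"
    and "margin_embedding Snk (Snk_rows n k) n m U V"
    and "card {i. i < n \<and> x i \<noteq> 0} \<le> k"
  shows "norm (\<Sum>i<n. x i *\<^sub>R V i) \<ge> m * (\<Sum>i<n. \<bar>x i\<bar>)"
proof -
  have "2 * k \<le> n" using assms(1) by linarith
  then obtain S where "S \<in> Snk_rows n k" "\<And>i. i \<in> S \<Longrightarrow> x i \<ge> 0"
    "\<And>i. i < n \<Longrightarrow> i \<notin> S \<Longrightarrow> x i \<le> 0"
    using assms(3) Snk_row_sign_compatible by blast
  then show ?thesis
    using margin_embedding_sign_compatible_norm_ge[OF assms(2)] by (simp add: Snk_def)
qed

end
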